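(* Let $s,m$ be positive integers, $n=sm$, and let $k\geq 2$ be an integer. Let $F\in\mathbb{F}_{2^s}[x]$ be a polynomial which, viewed as a function $\mathbb{F}_{2^n}\to\mathbb{F}_{2^n}$, is differentially $(1,2k)$-uniform, i.e. $\delta_{F,1}=2k$. Suppose that $m$ is not divisible by any integer $t$ with $2\leq t\leq k$. Then for all $a,b\in\mathbb{F}_{2^s}$ with $a\neq 0$, the equation $F(x+a)+F(x)=b$ has no solution $x\in\mathbb{F}_{2^n}\setminus\mathbb{F}_{2^s}$.
   Context: For a function $F:\mathbb{F}_{p^n}\to\mathbb{F}_{p^n}$ and $c\in\mathbb{F}_{p^n}$, let ${}_c\Delta_F(a,b)=\#\{x\in\mathbb{F}_{p^n}: F(x+a)-cF(x)=b\}$, and the $c$-differential uniformity of $F$ is $\delta_{F,c}=\max\{{}_c\Delta_F(a,b): a,b\in\mathbb{F}_{p^n},\ a\neq 0 \text{ if } c=1\}$. $F$ is called differentially $(c,\delta)$-uniform if $\delta_{F,c}=\delta$. *)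

theory Defs
  imports "HOL-Computational_Algebra.Polynomial"
begin

definition cDelta :: "('a::{field,finite} \<Rightarrow> 'a) \<Rightarrow> 'a \<Rightarrow> 'a \<Rightarrow> 'a \<Rightarrow> nat" where
  "cDelta F c a b = card {x. F (x + a) - c * F x = b}"

definition c_diff_uniformity :: "('a::{field,finite} \<Rightarrow> 'a) \<Rightarrow> 'a \<Rightarrow> nat" where
  "c_diff_uniformity F c = Max {cDelta F c a b | a b. c = 1 \<longrightarrow> a \<noteq> 0}"

text \<open>The subfield GF(2^s) inside a finite field of order 2^n (s dividing n):
  the fixed points of the s-th power of Frobenius.\<close>
definition subfield_pow2 :: "nat \<Rightarrow> 'a::field set" where
  "subfield_pow2 s = {x. x ^ (2 ^ s) = x}"

end

theory Submission
  imports
    Defs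
    "HOL-Combinatorics.Orbits"
begin

text \<open>Let \<open>S\<close> be the solution set of \<open>F(y + a) + F(y) = b\<close>; uniformity gives \<open>|S| \<le> 2k\<close>.
  As \<open>F\<close>, \<open>a\<close>, \<open>b\<close> are fixed by the Frobenius map \<open>\<sigma>(y) = y^(2^s)\<close>, the set \<open>S\<close> is
  invariant under \<open>\<sigma>\<close> and under the commuting fixed-point-free involution \<open>y \<mapsto> y + a\<close>.
  A solution \<open>x\<close> outside \<open>GF(2^s)\<close> has a \<open>\<sigma>\<close>-orbit \<open>O\<close> whose length \<open>d \<ge> 2\<close> divides \<open>m\<close>,
  so \<open>d > k\<close>. If \<open>O\<close> and \<open>O + a\<close> are disjoint, then \<open>|S| \<ge> 2d > 2k\<close>. Otherwise they are
  the same orbit, on which the involution acts without fixed points; then \<open>d = 2e\<close> with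
  \<open>e\<close> a divisor of \<open>m\<close> and \<open>e \<ge> 2\<close>, so \<open>e > k\<close> and \<open>|S| \<ge> d > 2k\<close>.\<close>

lemma orbit_subset_if_image_subset:
  assumes "x \<in> S" "f ` S \<subseteq> S"
  shows "orbit f x \<subseteq> S"
proof
  fix y assume "y \<in> orbit f x"
  then show "y \<in> S" by induction (use assms in auto)
qed

lemma card_orbit_eq_funpow_dist1:
  assumes "x \<in> orbit f x"
  shows "card (orbit f x) = funpow_dist1 f x x"
  using card_image[OF inj_on_funpow_dist1[OF assms]] orbit_conv_funpow_dist1[OF assms] by simp

lemma card_orbit_dvd:
  assumes "(f ^^ n) x = x" "0 < n"
  shows "card (orbit f x) dvd n"
proof -
  have x_orbit: "x \<in> orbit f x"
    unfolding orbit_altdef using assms by force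
  define d where "d = card (orbit f x)"
  have "(f ^^ d) x = x"
    using funpow_dist1_prop[OF x_orbit] by (simp add: d_def card_orbit_eq_funpow_dist1[OF x_orbit])
  then have multiple: "(f ^^ (d * q)) x = x" for q
    by (induction q) (simp_all add: funpow_add)
  have "(f ^^ (n mod d)) x = (f ^^ (n mod d)) ((f ^^ (d * (n div d))) x)"
    by (simp only: multiple)
  also have "\<dots> = x"
    using assms(1) by (simp flip: funpow_add[unfolded comp_def, THEN fun_cong])
  finally have "(f ^^ (n mod d)) x = x" .
  moreover have "n mod d < d"
    using x_orbit by (simp add: d_def card_orbit_eq_funpow_dist1)
  ultimately have "n mod d = 0"
    using funpow_dist1_least[of "n mod d" f x x]
    by (auto simp: d_def card_orbit_eq_funpow_dist1[OF x_orbit])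
  then show ?thesis
    by (simp add: d_def mod_eq_0_iff_dvd)
qed

lemma even_card_if_fixpoint_free_involution:
  assumes "finite A" "g ` A \<subseteq> A" "\<And>y. y \<in> A \<Longrightarrow> g (g y) = y" "\<And>y. y \<in> A \<Longrightarrow> g y \<noteq> y"
  shows "even (card A)"
  using assms
proof (induction "card A" arbitrary: A rule: less_induct)
  case less
  show ?case
  proof (cases "A = {}")
    case False
    then obtain y where y: "y \<in> A" by blast
    define B where "B = A - {y, g y}"
    have pair: "{y, g y} \<subseteq> A" "card {y, g y} = 2"
      using y less.prems(2) less.prems(4)[OF y] by auto
    have "g ` B \<subseteq> B"
      using y less.prems(2,3) unfolding B_def by auto metis+
    moreover have "card B = card A - 2"
      using pair less.prems(1) by (simp add: B_def card_Diff_subset)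
    moreover have "2 \<le> card A"
      using pair less.prems(1) by (metis card_mono)
    ultimately show ?thesis
      using less.hyps[of B] less.prems by (simp add: B_def)
  qed simp
qed

lemma card_orbit_bound_commuting_involution:
  assumes "finite S" "f ` S \<subseteq> S" "g ` S \<subseteq> S"
    and "\<And>y. f (g y) = g (f y)" "\<And>y. g (g y) = y" "\<And>y. g y \<noteq> y"
    and "x \<in> S" "x \<in> orbit f x"
  shows "2 * card (orbit f x) \<le> card S \<or> even (card (orbit f x)) \<and> card (orbit f x) \<le> card S"
proof -
  let ?O = "orbit f x"
  have O_S: "?O \<subseteq> S"
    using assms(7,2) by (rule orbit_subset_if_image_subset)
  have g_O: "g ` ?O = orbit f (g x)"
    using assms(4,8) by (intro orbit_inverse) auto
  have cyclic: "cyclic_on f ?O" "cyclic_on f (orbit f (g x))"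
    using assms(8) g_O by (auto intro: cyclic_on_singleI)
  show ?thesis
  proof (cases "g x \<in> ?O")
    case True
    then have "g ` ?O = ?O"
      using g_O cyclic(1) by (simp add: orbit_cyclic_eq3)
    then have "even (card ?O)"
      using even_card_if_fixpoint_free_involution[OF finite_orbit[OF assms(8)], of g] assms(5,6)
      by simp
    then show ?thesis
      using card_mono[OF assms(1) O_S] by blast
  next
    case False
    have disjoint: "?O \<inter> g ` ?O = {}"
    proof (rule ccontr)
      assume "?O \<inter> g ` ?O \<noteq> {}"
      then obtain z where "z \<in> ?O" "z \<in> orbit f (g x)"
        using g_O by blast
      then have "?O = g ` ?O"
        using g_O cyclic by (metis orbit_cyclic_eq3)
      then show False
        using False assms(8) by blast
    qed
    have "inj g"
      using assms(5) by (metis injI)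
    then have "card (g ` ?O) = card ?O"
      by (simp add: card_image inj_on_subset)
    then have "card (?O \<union> g ` ?O) = 2 * card ?O"
      using disjoint assms(8) by (simp add: card_Un_disjoint finite_orbit)
    moreover have "?O \<union> g ` ?O \<subseteq> S"
      using O_S assms(3) by auto
    ultimately have "2 * card ?O \<le> card S"
      using card_mono[OF assms(1)] by metis
    then show ?thesis ..
  qed
qed

lemma card_gt_if_invariant_under_periodic_map_and_involution:
  assumes "finite S" "f ` S \<subseteq> S" "g ` S \<subseteq> S"
    and "\<And>y. f (g y) = g (f y)" "\<And>y. g (g y) = y" "\<And>y. g y \<noteq> y"
    and "x \<in> S" "(f ^^ m) x = x" "0 < m" "f x \<noteq> x"
    and "2 \<le> k" "\<forall>t. 2 \<le> t \<and> t \<le> k \<longrightarrow> \<not> t dvd m"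
  shows "2 * k < card S"
proof -
  have x_orbit: "x \<in> orbit f x"
    unfolding orbit_altdef using assms(8,9) by force
  define d where "d = card (orbit f x)"
  have "d dvd m"
    unfolding d_def using assms(8,9) by (rule card_orbit_dvd)
  moreover have "2 \<le> d"
  proof -
    have "{x, f x} \<subseteq> orbit f x"
      using x_orbit by (auto intro: orbit.base)
    then show ?thesis
      using assms(10) x_orbit unfolding d_def by (metis card_2_iff card_mono finite_orbit)
  qed
  ultimately have "k < d"
    using assms(12) by (meson not_le)
  consider "2 * d \<le> card S" | "even d" "d \<le> card S"
    using card_orbit_bound_commuting_involution[OF assms(1-7) x_orbit] d_def by blast
  then show ?thesis
  proof cases
    case 1
    then show ?thesis using \<open>k < d\<close> by linarith
  next
    case 2
    then obtain e where e: "d = 2 * e" by blast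
    have "e dvd m"
      using \<open>d dvd m\<close> e by (metis dvd_mult_right)
    moreover have "2 \<le> e"
      using \<open>k < d\<close> assms(11) e by linarith
    ultimately have "k < e"
      using assms(12) by (meson not_le)
    then show ?thesis
      using 2 e by linarith
  qed
qed

(* Equivalent to CHAR_dvd_CARD, whose theory Residues cannot be imported alongside polynomials:
   it brings in HOL-Algebra, whose coeff shadows the polynomial one. *)
lemma of_nat_card_UNIV_eq_0: "of_nat (card (UNIV :: 'a set)) = (0 :: 'a::{ring_1,finite})"
proof -
  have "(\<Sum>y\<in>UNIV. y) + of_nat (card (UNIV :: 'a set)) = (\<Sum>y\<in>UNIV. y + (1 :: 'a))"
    by (simp add: sum.distrib)
  also have "\<dots> = (\<Sum>y\<in>UNIV. y)"
    by (rule sum.reindex_bij_witness[of _ "\<lambda>y. y - 1" "\<lambda>y. y + 1"]) auto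
  finally show ?thesis
    by simp
qed

lemma CHAR_eq_2_if_card_power_of_2:
  assumes "card (UNIV :: 'a::{field,finite} set) = 2 ^ n"
  shows "CHAR('a) = 2"
proof -
  have "prime CHAR('a)"
    by (simp add: finite_imp_CHAR_pos prime_CHAR_semidom)
  moreover have "CHAR('a) dvd 2 ^ n"
    using of_nat_card_UNIV_eq_0[where 'a='a] assms by (simp only: of_nat_eq_0_iff_char_dvd)
  ultimately show ?thesis
    by (metis prime_dvd_power primes_dvd_imp_eq two_is_prime_nat)
qed

(* The library's finite_field_power_card_eq_same needs the class finite_field, which the
   sort {field, finite} does not provide. *)
lemma field_power_card_eq_same:
  fixes x :: "'a::{field,finite}"
  shows "x ^ card (UNIV :: 'a set) = x"
proof (cases "x = 0")
  case False
  let ?U = "UNIV - {0 :: 'a}"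
  have "x ^ card ?U * \<Prod>?U = (\<Prod>y\<in>?U. x * y)"
    by (simp add: prod.distrib)
  also have "\<dots> = \<Prod>?U"
    by (rule prod.reindex_bij_witness[of _ "\<lambda>y. y / x" "\<lambda>y. x * y"]) (use False in auto)
  finally have "x ^ card ?U = 1"
    by (simp add: prod_zero_iff)
  moreover have "card (UNIV :: 'a set) = Suc (card ?U)"
    by (simp add: card_Diff_singleton finite_UNIV_card_ge_0 Suc_diff_1)
  then have "x ^ card (UNIV :: 'a set) = x * x ^ card ?U"
    by (simp only: power_Suc)
  ultimately show ?thesis
    by simp
qed (simp add: finite_UNIV_card_ge_0)

lemma funpow_power_eq: "((\<lambda>y. y ^ q) ^^ n) x = x ^ (q ^ n)"
  for x :: "'a::monoid_mult"
  by (induction n) (simp_all add: mult.commute flip: power_mult)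

lemma poly_power_CHAR_power:
  fixes p :: "'a::comm_ring_1 poly"
  assumes "prime CHAR('a)" "q = CHAR('a) ^ j" "\<forall>i. coeff p i ^ q = coeff p i"
  shows "poly p (y ^ q) = poly p y ^ q"
proof -
  have "poly p y ^ q = (\<Sum>i\<le>degree p. (coeff p i * y ^ i) ^ q)"
    unfolding poly_altdef using assms(1,2) by (rule freshmans_dream_sum')
  also have "\<dots> = (\<Sum>i\<le>degree p. coeff p i * (y ^ q) ^ i)"
    using assms(3) by (simp add: power_mult_distrib flip: power_mult) (simp add: mult.commute)
  finally show ?thesis
    by (simp add: poly_altdef)
qed

lemma poly_shift_sum_eq_power_CHAR_power:
  fixes p :: "'a::comm_ring_1 poly"
  assumes "prime CHAR('a)" "q = CHAR('a) ^ j" "\<forall>i. coeff p i ^ q = coeff p i"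
    and "a ^ q = a" "b ^ q = b" "poly p (y + a) + poly p y = b"
  shows "poly p (y ^ q + a) + poly p (y ^ q) = b"
proof -
  have "poly p (y ^ q + a) + poly p (y ^ q) = poly p ((y + a) ^ q) + poly p (y ^ q)"
    by (simp add: freshmans_dream'[OF assms(1,2)] assms(4))
  also have "\<dots> = poly p (y + a) ^ q + poly p y ^ q"
    by (simp only: poly_power_CHAR_power[OF assms(1-3)])
  also have "\<dots> = (poly p (y + a) + poly p y) ^ q"
    by (simp add: freshmans_dream'[OF assms(1,2)])
  finally show ?thesis
    by (simp only: assms(5,6))
qed

lemma cDelta_le_c_diff_uniformity:
  assumes "c = 1 \<longrightarrow> a \<noteq> 0"
  shows "cDelta F c a b \<le> c_diff_uniformity F c"
  unfolding c_diff_uniformity_def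
proof (rule Max_ge)
  show "finite {cDelta F c a b |a b. c = 1 \<longrightarrow> a \<noteq> 0}"
    by (rule finite_subset[of _ "range (case_prod (cDelta F c))"]) auto
  show "cDelta F c a b \<in> {cDelta F c a b |a b. c = 1 \<longrightarrow> a \<noteq> 0}"
    using assms by blast
qed

lemma card_shift_sum_solutions_gt_if_solution_outside_subfield:
  fixes F :: "'a::{field,finite} poly"
  assumes "card (UNIV :: 'a set) = 2 ^ (s * m)" "0 < m"
    and "\<forall>i. coeff F i \<in> subfield_pow2 s" "a \<in> subfield_pow2 s" "b \<in> subfield_pow2 s" "a \<noteq> 0"
    and "poly F (x + a) + poly F x = b" "x \<notin> subfield_pow2 s"
    and "2 \<le> k" "\<forall>t. 2 \<le> t \<and> t \<le> k \<longrightarrow> \<not> t dvd m"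
  shows "2 * k < card {y. poly F (y + a) + poly F y = b}" (is "_ < card ?S")
proof (rule card_gt_if_invariant_under_periodic_map_and_involution)
  have char: "CHAR('a) = 2"
    using assms(1) by (rule CHAR_eq_2_if_card_power_of_2)
  then have two: "(2 :: 'a) = 0"
    using of_nat_CHAR[where 'a = 'a] by simp
  have coeff_F: "\<forall>i. coeff F i ^ CHAR('a) ^ s = coeff F i"
    using assms(3) char by (simp add: subfield_pow2_def)
  show "(\<lambda>y. y ^ CHAR('a) ^ s) ` ?S \<subseteq> ?S"
    using poly_shift_sum_eq_power_CHAR_power[OF _ refl coeff_F] char assms(4,5)
    by (auto simp: subfield_pow2_def)
  show "(\<lambda>y. y + a) ` ?S \<subseteq> ?S"
    by (auto simp: two add.commute)
  show "(y + a) ^ CHAR('a) ^ s = y ^ CHAR('a) ^ s + a" for y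
    using char assms(4) by (simp add: freshmans_dream' subfield_pow2_def)
  show "y + a + a = y" for y
    by (simp add: two)
  have "(CHAR('a) ^ s) ^ m = card (UNIV :: 'a set)"
    using char assms(1) by (simp add: power_mult)
  then show "((\<lambda>y. y ^ CHAR('a) ^ s) ^^ m) x = x"
    by (simp add: funpow_power_eq field_power_card_eq_same)
  show "x ^ CHAR('a) ^ s \<noteq> x"
    using assms(8) char by (simp add: subfield_pow2_def)
qed (use assms(2,6,7,9,10) in auto)

theorem proposition2p2:
  fixes F :: "'a::{field,finite} poly" and s m n k :: nat
  assumes "s > 0" and "m > 0" and "n = s * m"
    and "card (UNIV :: 'a set) = 2 ^ n"
    and "k \<ge> 2"
    and "\<forall>i. coeff F i \<in> subfield_pow2 s"
    and "c_diff_uniformity (poly F) 1 = 2 * k"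
    and "\<forall>t. 2 \<le> t \<and> t \<le> k \<longrightarrow> \<not> t dvd m"
  shows "\<forall>a b x. a \<in> subfield_pow2 s \<and> b \<in> subfield_pow2 s \<and> a \<noteq> 0
           \<and> poly F (x + a) + poly F x = b \<longrightarrow> x \<in> subfield_pow2 s"
proof (intro allI impI)
  fix a b x :: 'a
  assume solution: "a \<in> subfield_pow2 s \<and> b \<in> subfield_pow2 s \<and> a \<noteq> 0
    \<and> poly F (x + a) + poly F x = b"
  have "card {y. poly F (y + a) + poly F y = b} = cDelta (poly F) 1 a b"
    unfolding cDelta_def mult_1 minus_CHAR_2[OF CHAR_eq_2_if_card_power_of_2[OF assms(4)]] ..
  also have "\<dots> \<le> 2 * k"
    using cDelta_le_c_diff_uniformity[of 1 a "poly F" b] solution assms(7) by simp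
  finally show "x \<in> subfield_pow2 s"
    using card_shift_sum_solutions_gt_if_solution_outside_subfield[of s m F a b x k]
      solution assms(2-6,8) by fastforce
qed

end
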